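(* Let $\mathcal{G}_{\mathcal{B}}^M=\{p_b(\mathbf{z}_t\mid\mathbf{z}_{t-1},\dots,\mathbf{z}_{t-M})=\mathcal{N}(\mathbf{z}_t\mid\mathbf{m}(\mathbf{z}_{t-1},\dots,\mathbf{z}_{t-M},b),\boldsymbol{\Sigma}(\mathbf{z}_{t-1},\dots,\mathbf{z}_{t-M},b)):b\in\mathcal{B}\}$ with $\boldsymbol{\Sigma}(\cdot,b)\succ0$, satisfying unique indexing (for all $b\ne b'$ there is a positive-measure $\mathcal{Z}\subset\mathbb{R}^{mM}$ on which pointwise $\mathbf{m}(\cdot,b)\ne\mathbf{m}(\cdot,b')$ or $\boldsymbol{\Sigma}(\cdot,b)\ne\boldsymbol{\Sigma}(\cdot,b')$) and zero-measure intersection of moments: for any $b\ne b'\in\mathcal{B}$ the set $\mathcal{X}_{b,b'}=\{(\mathbf{z}_{t-1},\dots,\mathbf{z}_{t-M})\in\mathbb{R}^{mM}:\mathbf{m}(\cdot,b)=\mathbf{m}(\cdot,b')\text{ and }\boldsymbol{\Sigma}(\cdot,b)=\boldsymbol{\Sigma}(\cdot,b')\text{ at this point}\}$ has Lebesgue measure zero. Then, setting $v_b(\mathbf{z},\mathbf{y}_1,\dots,\mathbf{y}_M):=p_b(\mathbf{z}_t=\mathbf{z}\mid\mathbf{z}_{t-1}=\mathbf{y}_1,\dots,\mathbf{z}_{t-M}=\mathbf{y}_M)$, the family $\{v_b:b\in\mathcal{B}\}$ satisfies (b4): there exists a full-measure set $\mathcal{Y}\subset\mathbb{R}^{mM}$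 such that for all positive-measure sets $\mathcal{Y}'\subset\mathcal{Y}$ and $\mathcal{Z}\subset\mathbb{R}^m$, the family is linearly independent under finite mixtures on $(\mathbf{z},\mathbf{y}_1,\dots,\mathbf{y}_M)\in\mathcal{Z}\times\mathcal{Y}'$.
   Context: Measures are Lebesgue; full measure means null complement. A family is linearly independent under finite mixtures on a set $D$ if every finite subfamily is linearly independent as functions on $D$. *)

theory Defs
  imports "HOL-Analysis.Analysis"
begin

definition pos_def_mat :: "real^'n^'n \<Rightarrow> bool" where
  "pos_def_mat S \<longleftrightarrow> transpose S = S \<and> (\<forall>x. x \<noteq> 0 \<longrightarrow> x \<bullet> (S *v x) > 0)"

definition gauss_density :: "real^'n \<Rightarrow> real^'n \<Rightarrow> real^'n^'n \<Rightarrow> real" where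
  "gauss_density z mu S =
     exp (- (1/2) * ((z - mu) \<bullet> (matrix_inv S *v (z - mu))))
     / sqrt ((2 * pi) ^ CARD('n) * det S)"

definition lin_indep_finite_mixtures :: "'b set \<Rightarrow> ('b \<Rightarrow> 'x \<Rightarrow> real) \<Rightarrow> 'x set \<Rightarrow> bool" where
  "lin_indep_finite_mixtures B v D \<longleftrightarrow>
     (\<forall>F c. finite F \<and> F \<subseteq> B \<and> (\<forall>x\<in>D. (\<Sum>b\<in>F. c b * v b x) = 0) \<longrightarrow> (\<forall>b\<in>F. c b = 0))"

end

(*
  Take Y to be the whole space. Given a finite mixture vanishing on Z x Y', choose y in Y' outside
  the finitely many null sets where two parameter pairs (mu y b, Sig y b) coincide; it remains to
  show that Gaussians with pairwise distinct parameters are linearly independent on any Z of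
  positive measure. For a suitable direction v and base point x, the density of N(m, S) restricted
  to the line x + t v is a constant times exp (a t^2 + beta t), and beta = v . S^-1 (m - x) takes
  pairwise distinct values; by Fubini, some such line meets Z in a set of positive measure, hence
  with a limit point. A combination of the functions exp (a t^2 + beta t) vanishing there vanishes
  on all of R by analytic continuation, and then its coefficients vanish one by one, in the order
  in which the terms dominate as t tends to infinity.
*)
theory Submission
  imports Defs "HOL-Complex_Analysis.Conformal_Mappings" "HOL-Real_Asymp.Real_Asymp"
begin

lemma exp_quadratic_tendsto_0:
  fixes a b :: real
  assumes "a < 0 \<or> (a = 0 \<and> b < 0)"
  shows "((\<lambda>t. exp (a * t^2 + b * t)) \<longlongrightarrow> 0) at_top"
  using assms by (elim disjE conjE) real_asymp+

lemma finite_lex_max: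
  fixes a b :: "'i \<Rightarrow> real"
  assumes "finite F" "F \<noteq> {}"
  obtains i0 where "i0 \<in> F" "\<And>j. j \<in> F \<Longrightarrow> a j < a i0 \<or> (a j = a i0 \<and> b j \<le> b i0)"
proof -
  define F' where "F' = {j\<in>F. a j = Max (a ` F)}"
  have "Max (a ` F) \<in> a ` F"
    using assms by (intro Max_in) auto
  then have "finite F'" "F' \<noteq> {}"
    using assms(1) by (auto simp: F'_def)
  then have "Max (b ` F') \<in> b ` F'"
    by (intro Max_in) auto
  then obtain i0 where "i0 \<in> F'" "b i0 = Max (b ` F')"
    by auto
  moreover have "a j \<le> Max (a ` F)" if "j \<in> F" for j
    using assms(1) that by simp
  moreover have "b j \<le> Max (b ` F')" if "j \<in> F'" for j
    using \<open>finite F'\<close> that by simp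
  ultimately show thesis
    by (intro that[of i0]) (fastforce simp: F'_def order_le_less)+
qed

lemma exp_quadratic_sum_dominant_tendsto:
  fixes a b c :: "'i \<Rightarrow> real"
  assumes "finite F" "inj_on (\<lambda>i. (a i, b i)) F" "i0 \<in> F"
    and dom: "\<And>j. j \<in> F \<Longrightarrow> a j < a i0 \<or> (a j = a i0 \<and> b j \<le> b i0)"
  shows "((\<lambda>t. \<Sum>j\<in>F. c j * exp ((a j - a i0) * t^2 + (b j - b i0) * t)) \<longlongrightarrow> c i0) at_top"
proof -
  have "((\<lambda>t. \<Sum>j\<in>F. c j * exp ((a j - a i0) * t^2 + (b j - b i0) * t))
          \<longlongrightarrow> (\<Sum>j\<in>F. c j * (if j = i0 then 1 else 0))) at_top"
  proof (intro tendsto_intros)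
    fix j assume "j \<in> F"
    show "((\<lambda>t. exp ((a j - a i0) * t^2 + (b j - b i0) * t)) \<longlongrightarrow> (if j = i0 then 1 else 0)) at_top"
    proof (cases "j = i0")
      case False
      then have "(a j, b j) \<noteq> (a i0, b i0)"
        using assms(2,3) \<open>j \<in> F\<close> by (auto dest: inj_onD)
      then have "a j - a i0 < 0 \<or> (a j - a i0 = 0 \<and> b j - b i0 < 0)"
        using dom[OF \<open>j \<in> F\<close>] by auto
      with False show ?thesis by (simp add: exp_quadratic_tendsto_0)
    qed simp
  qed
  with assms(1,3) show ?thesis
    by (simp add: if_distrib sum.delta cong: if_cong)
qed

lemma exp_quadratic_linearly_independent:
  fixes a b c :: "'i \<Rightarrow> real"
  assumes "finite F" "inj_on (\<lambda>i. (a i, b i)) F"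
    and "\<And>t. (\<Sum>i\<in>F. c i * exp (a i * t^2 + b i * t)) = 0"
  shows "\<forall>i\<in>F. c i = 0"
  using assms
proof (induction F rule: finite_psubset_induct)
  case (psubset F)
  show ?case
  proof (cases "F = {}")
    case False
    then obtain i0 where i0: "i0 \<in> F"
      "\<And>j. j \<in> F \<Longrightarrow> a j < a i0 \<or> (a j = a i0 \<and> b j \<le> b i0)"
      using finite_lex_max[OF psubset.hyps] by metis
    \<comment> \<open>Dividing by the dominant exponential leaves a function that is identically zero
        and tends to the dominant coefficient.\<close>
    have "(\<Sum>j\<in>F. c j * exp ((a j - a i0) * t^2 + (b j - b i0) * t)) = 0" for t
    proof -
      have "(\<Sum>j\<in>F. c j * exp ((a j - a i0) * t^2 + (b j - b i0) * t))
            = exp (- (a i0 * t^2 + b i0 * t)) * (\<Sum>i\<in>F. c i * exp (a i * t^2 + b i * t))"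
        unfolding sum_distrib_left by (rule sum.cong) (auto simp: exp_add[symmetric] algebra_simps)
      with psubset.prems(2) show ?thesis by simp
    qed
    with exp_quadratic_sum_dominant_tendsto[OF psubset.hyps psubset.prems(1) i0, of c]
    have "c i0 = 0"
      by (simp add: tendsto_const_iff)
    moreover have "\<forall>i\<in>F - {i0}. c i = 0"
    proof (rule psubset.IH)
      show "F - {i0} \<subset> F" using i0(1) by auto
      show "inj_on (\<lambda>i. (a i, b i)) (F - {i0})"
        using psubset.prems(1) by (auto intro: inj_on_subset)
      show "(\<Sum>i\<in>F - {i0}. c i * exp (a i * t^2 + b i * t)) = 0" for t
        using psubset.prems(2)[of t] \<open>c i0 = 0\<close> i0(1) psubset.hyps by (simp add: sum.remove)
    qed
    ultimately show ?thesis by auto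
  qed simp
qed

lemma exp_quadratic_sum_eq_0_if_islimpt:
  fixes a b c :: "'i \<Rightarrow> real"
  assumes "\<xi> islimpt T" "\<And>s. s \<in> T \<Longrightarrow> (\<Sum>i\<in>F. c i * exp (a i * s^2 + b i * s)) = 0"
  shows "(\<Sum>i\<in>F. c i * exp (a i * t^2 + b i * t)) = 0"
proof -
  define G :: "complex \<Rightarrow> complex"
    where "G w = (\<Sum>i\<in>F. of_real (c i) * exp (of_real (a i) * w^2 + of_real (b i) * w))" for w
  have G_of_real: "G (of_real s) = of_real (\<Sum>i\<in>F. c i * exp (a i * s^2 + b i * s))" for s
    unfolding G_def by (simp add: exp_of_real[symmetric])
  have limpt: "of_real \<xi> islimpt (of_real ` T :: complex set)"
    using assms(1) by (rule islimpt_isCont_image) (auto simp: eventually_at_filter)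
  have "G holomorphic_on UNIV"
    unfolding G_def by (intro holomorphic_intros)
  then have "G (of_real t) = 0"
    by (rule analytic_continuation[OF _ open_UNIV connected_UNIV subset_UNIV UNIV_I limpt])
       (auto simp: G_of_real assms(2))
  then show ?thesis
    by (simp only: G_of_real of_real_eq_0_iff)
qed

lemma lin_indep_finite_mixturesI:
  assumes "\<And>F c b. finite F \<Longrightarrow> F \<subseteq> B \<Longrightarrow> (\<And>x. x \<in> D \<Longrightarrow> (\<Sum>b\<in>F. c b * v b x) = 0) \<Longrightarrow>
             b \<in> F \<Longrightarrow> c b = 0"
  shows "lin_indep_finite_mixtures B v D"
  using assms unfolding lin_indep_finite_mixtures_def by blast

lemma lin_indep_finite_mixturesD:
  assumes "lin_indep_finite_mixtures B v D" "finite F" "F \<subseteq> B"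
    and "\<And>x. x \<in> D \<Longrightarrow> (\<Sum>b\<in>F. c b * v b x) = 0" "b \<in> F"
  shows "c b = 0"
  using assms unfolding lin_indep_finite_mixtures_def by blast

lemma pos_def_mat_invertible:
  fixes S :: "real^'n^'n"
  assumes "pos_def_mat S"
  shows "invertible S"
proof -
  have "x = 0" if "S *v x = 0" for x
    using assms that unfolding pos_def_mat_def by (metis inner_zero_right less_irrefl)
  then show ?thesis
    by (simp add: invertible_left_inverse matrix_left_invertible_ker)
qed

lemma
  fixes A :: "real^'n^'n"
  assumes "invertible A"
  shows matrix_inv_right: "A ** matrix_inv A = mat 1"
    and matrix_inv_left: "matrix_inv A ** A = mat 1"
proof -
  have "\<exists>A'. A ** A' = mat 1 \<and> A' ** A = mat 1"
    using assms by (simp add: invertible_def)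
  then have "A ** matrix_inv A = mat 1 \<and> matrix_inv A ** A = mat 1"
    unfolding matrix_inv_def by (rule someI_ex)
  then show "A ** matrix_inv A = mat 1" "matrix_inv A ** A = mat 1"
    by auto
qed

lemma matrix_inv_injective:
  fixes A B :: "real^'n^'n"
  assumes "invertible A" "invertible B" "matrix_inv A = matrix_inv B"
  shows "A = B"
proof -
  have "A = A ** (matrix_inv B ** B)"
    using matrix_inv_left[OF assms(2)] by simp
  also have "\<dots> = (A ** matrix_inv A) ** B"
    using assms(3) by (simp add: matrix_mul_assoc)
  also have "\<dots> = B"
    using matrix_inv_right[OF assms(1)] by simp
  finally show ?thesis .
qed

lemma matrix_inv_mult_vector_eq_0_iff:
  fixes A :: "real^'n^'n"
  assumes "invertible A"
  shows "matrix_inv A *v w = 0 \<longleftrightarrow> w = 0"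
proof
  assume "matrix_inv A *v w = 0"
  then have "(A ** matrix_inv A) *v w = 0"
    by (simp flip: matrix_vector_mul_assoc)
  then show "w = 0"
    using matrix_inv_right[OF assms] by simp
qed simp

lemma pos_def_mat_inv_symmetric:
  fixes S :: "real^'n^'n"
  assumes "pos_def_mat S"
  shows "transpose (matrix_inv S) = matrix_inv S"
proof -
  let ?P = "matrix_inv S"
  have S: "invertible S" "transpose S = S"
    using assms pos_def_mat_invertible unfolding pos_def_mat_def by auto
  have "transpose ?P = transpose ?P ** (S ** ?P)"
    by (simp add: matrix_inv_right[OF S(1)])
  also have "\<dots> = transpose (S ** ?P) ** ?P"
    by (simp add: matrix_mul_assoc matrix_transpose_mul S(2))
  also have "\<dots> = ?P"
    by (simp add: matrix_inv_right[OF S(1)] transpose_mat)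
  finally show ?thesis .
qed

lemma inner_symmetric_matrix_commute:
  fixes P :: "real^'n^'n"
  assumes "transpose P = P"
  shows "u \<bullet> (P *v w) = w \<bullet> (P *v u)"
proof -
  have "u \<bullet> (P *v w) = (transpose P *v u) \<bullet> w"
    by (simp add: dot_lmul_matrix)
  then show ?thesis
    by (simp add: assms inner_commute)
qed

lemma gauss_density_along_line:
  fixes S :: "real^'n^'n"
  assumes "transpose (matrix_inv S) = matrix_inv S"
  shows "gauss_density (x + t *\<^sub>R v) m S
         = gauss_density x m S * exp (- (1/2) * (v \<bullet> (matrix_inv S *v v)) * t^2
                                     + (v \<bullet> (matrix_inv S *v (m - x))) * t)"
proof -
  let ?P = "matrix_inv S" and ?w = "x - m"
  have "(?w + t *\<^sub>R v) \<bullet> (?P *v (?w + t *\<^sub>R v))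
        = ?w \<bullet> (?P *v ?w) + t * (?w \<bullet> (?P *v v)) + t * (v \<bullet> (?P *v ?w)) + t^2 * (v \<bullet> (?P *v v))"
    by (simp add: matrix_vector_right_distrib matrix_vector_mult_scaleR inner_add_left inner_add_right
        power2_eq_square algebra_simps)
  also have "\<dots> = ?w \<bullet> (?P *v ?w) + 2 * t * (v \<bullet> (?P *v ?w)) + t^2 * (v \<bullet> (?P *v v))"
    using inner_symmetric_matrix_commute[OF assms, of ?w v] by simp
  finally have "- (1/2) * ((x + t *\<^sub>R v - m) \<bullet> (?P *v (x + t *\<^sub>R v - m)))
      = - (1/2) * (?w \<bullet> (?P *v ?w)) + (- (1/2) * (v \<bullet> (?P *v v)) * t^2 + (v \<bullet> (?P *v (m - x))) * t)"
    by (simp add: algebra_simps matrix_vector_mult_diff_distrib inner_diff_right)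
  then show ?thesis
    unfolding gauss_density_def by (simp only: exp_add) simp
qed

lemma emeasure_lborel_line_section_pos:
  fixes B N :: "'a::euclidean_space set"
  assumes B: "B \<in> sets borel" "emeasure lborel B > 0" and N: "N \<in> null_sets lebesgue"
  obtains x where "x \<notin> N" "emeasure lborel {t::real \<in> {0..1}. x + t *\<^sub>R v \<in> B} > 0"
proof -
  from N obtain N' where N': "N' \<in> null_sets lborel" "N \<subseteq> N'"
    unfolding null_sets_completion_iff2 by blast
  define f where "f x t = (indicator B (x + t *\<^sub>R v) * indicator {0..1::real} t :: ennreal)" for x t
  have [measurable]: "B \<in> sets borel" by (rule B(1))
  have slice_measure:
    "(\<integral>\<^sup>+ t. f x t \<partial>lborel) = emeasure lborel {t::real \<in> {0..1}. x + t *\<^sub>R v \<in> B}" for x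
  proof -
    have "(\<integral>\<^sup>+ t. f x t \<partial>lborel)
          = (\<integral>\<^sup>+ t. indicator {t::real \<in> {0..1}. x + t *\<^sub>R v \<in> B} t \<partial>lborel)"
      unfolding f_def by (rule nn_integral_cong) (auto simp: indicator_def)
    also have "\<dots> = emeasure lborel {t::real \<in> {0..1}. x + t *\<^sub>R v \<in> B}"
      by (rule nn_integral_indicator) measurable
    finally show ?thesis .
  qed
  have translate: "(\<integral>\<^sup>+ x. f x t \<partial>lborel) = emeasure lborel B * indicator {0..1::real} t" for t
  proof -
    have "(\<integral>\<^sup>+ x. f x t \<partial>lborel)
          = (\<integral>\<^sup>+ x. indicator B (t *\<^sub>R v + x) \<partial>lborel) * indicator {0..1::real} t"
      unfolding f_def by (subst nn_integral_multc) (auto simp: add.commute)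
    also have "(\<integral>\<^sup>+ x. indicator B (t *\<^sub>R v + x) \<partial>lborel)
               = (\<integral>\<^sup>+ y. indicator B y \<partial>distr lborel borel ((+) (t *\<^sub>R v)))"
      by (subst nn_integral_distr) auto
    also have "\<dots> = emeasure lborel B"
      by (simp add: lborel_distr_plus)
    finally show ?thesis .
  qed
  \<comment> \<open>By Fubini and translation invariance the section measures integrate to the measure of B,
      so they cannot vanish almost everywhere.\<close>
  have "(\<integral>\<^sup>+ x. (\<integral>\<^sup>+ t. f x t \<partial>lborel) \<partial>lborel)
        = (\<integral>\<^sup>+ t. (\<integral>\<^sup>+ x. f x t \<partial>lborel) \<partial>lborel)"
    by (rule lborel_pair.Fubini'[symmetric]) (simp add: f_def)
  also have "\<dots> = emeasure lborel B"
    by (simp add: translate nn_integral_cmult_indicator)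
  finally have "(\<integral>\<^sup>+ x. (\<integral>\<^sup>+ t. f x t \<partial>lborel) \<partial>lborel) \<noteq> 0"
    using B(2) by simp
  then have "\<not> (AE x in lborel. (\<integral>\<^sup>+ t. f x t \<partial>lborel) = 0)"
    using nn_integral_cong_AE by fastforce
  then have "\<not> {x \<in> space lborel. (\<integral>\<^sup>+ t. f x t \<partial>lborel) \<noteq> 0} \<subseteq> N'"
    using AE_I'[OF N'(1)] by (rule contrapos_nn)
  then obtain x where "x \<notin> N'" "(\<integral>\<^sup>+ t. f x t \<partial>lborel) \<noteq> 0"
    by auto
  with N'(2) show thesis
    by (intro that[of x]) (auto simp: slice_measure zero_less_iff_neq_zero)
qed

lemma emeasure_lborel_pos_imp_islimpt:
  fixes T :: "real set"
  assumes "bounded T" "emeasure lborel T > 0"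
  obtains \<xi> where "\<xi> islimpt T"
proof -
  have "infinite T"
  proof
    assume "finite T"
    then have "emeasure lborel T = 0"
      by (simp add: finite_imp_null_set_lborel null_setsD1)
    with assms(2) show False
      by simp
  qed
  then show thesis
    by (rule bounded_infinite_imp_islimpt[OF order_refl assms(1)]) (rule that)
qed

lemma lebesgue_pos_imp_borel_subset:
  assumes "Z \<in> sets lebesgue" "emeasure lebesgue Z > 0"
  obtains B where "B \<in> sets borel" "B \<subseteq> Z" "emeasure lborel B > 0"
proof
  show "main_part lborel Z \<in> sets borel"
    using main_part_sets[OF assms(1)] by simp
  show "main_part lborel Z \<subseteq> Z"
    using main_part_null_part_Un[OF assms(1)] by blast
  show "emeasure lborel (main_part lborel Z) > 0"
    using assms by simp
qed

lemma ex_vector_nonzero_image_or_inner: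
  fixes D :: "'i \<Rightarrow> real^'n^'m" and d :: "'i \<Rightarrow> real^'n"
  assumes "finite I" "\<And>i. i \<in> I \<Longrightarrow> D i \<noteq> 0 \<or> d i \<noteq> 0"
  shows "\<exists>v. \<forall>i\<in>I. D i *v v \<noteq> 0 \<or> d i \<bullet> v \<noteq> 0"
proof -
  \<comment> \<open>A nonzero row of D i, or else d i, is a normal vector whose hyperplane contains all bad v.\<close>
  have "\<exists>a. a \<noteq> 0 \<and> (\<forall>v. a \<bullet> v \<noteq> 0 \<longrightarrow> D i *v v \<noteq> 0 \<or> d i \<bullet> v \<noteq> 0)"
    if "i \<in> I" for i
  proof (cases "D i = 0")
    case False
    then obtain j where "D i $ j \<noteq> 0"
      by (auto simp: vec_eq_iff)
    then show ?thesis
      by (intro exI[of _ "D i $ j"]) (auto simp: vec_eq_iff matrix_vector_mul_component)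
  qed (use assms(2) that in auto)
  then obtain a where a: "\<And>i. i \<in> I \<Longrightarrow> a i \<noteq> 0"
    "\<And>i v. i \<in> I \<Longrightarrow> a i \<bullet> v \<noteq> 0 \<Longrightarrow> D i *v v \<noteq> 0 \<or> d i \<bullet> v \<noteq> 0"
    by metis
  have "negligible (\<Union>i\<in>I. {v. a i \<bullet> v = 0})"
    using assms(1) a(1) by (auto intro!: negligible_hyperplane)
  then have "(\<Union>i\<in>I. {v. a i \<bullet> v = 0}) \<noteq> UNIV"
    using non_negligible_UNIV by metis
  then obtain v where "\<And>i. i \<in> I \<Longrightarrow> a i \<bullet> v \<noteq> 0"
    by blast
  with a(2) show ?thesis
    by blast
qed

lemma ex_vector_inj_on_mult_vector_inner:
  fixes A :: "'b \<Rightarrow> real^'n^'m" and c :: "'b \<Rightarrow> real^'n"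
  assumes "finite F" "inj_on (\<lambda>b. (A b, c b)) F"
  shows "\<exists>v. inj_on (\<lambda>b. (A b *v v, c b \<bullet> v)) F"
proof -
  define Pairs where "Pairs = {p \<in> F \<times> F. fst p \<noteq> snd p}"
  have "finite Pairs"
    by (rule finite_subset[of _ "F \<times> F"]) (auto simp: Pairs_def assms(1))
  have "A (fst p) - A (snd p) \<noteq> 0 \<or> c (fst p) - c (snd p) \<noteq> 0" if "p \<in> Pairs" for p
    using assms(2) that by (auto simp: Pairs_def dest: inj_onD)
  with \<open>finite Pairs\<close>
  have "\<exists>v. \<forall>p\<in>Pairs. (A (fst p) - A (snd p)) *v v \<noteq> 0 \<or> (c (fst p) - c (snd p)) \<bullet> v \<noteq> 0"
    by (rule ex_vector_nonzero_image_or_inner)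
  then show ?thesis
    by (auto simp: inj_on_def Pairs_def matrix_vector_mult_diff_rdistrib inner_diff_left)
qed

lemma negligible_affine_coincidences:
  fixes u :: "'b \<Rightarrow> 'a::euclidean_space" and k :: "'b \<Rightarrow> real"
  assumes "finite F" "inj_on (\<lambda>b. (u b, k b)) F"
  shows "negligible {x. \<not> inj_on (\<lambda>b. u b \<bullet> x + k b) F}"
proof (rule negligible_subset)
  let ?H = "\<lambda>p. {x. (u (fst p) - u (snd p)) \<bullet> x = k (snd p) - k (fst p)}"
  show "negligible (\<Union>p\<in>F \<times> F - Id. ?H p)"
  proof (rule negligible_Union)
    show "finite (?H ` (F \<times> F - Id))"
      using assms(1) by simp
    fix H assume "H \<in> ?H ` (F \<times> F - Id)"
    then obtain p where "p \<in> F \<times> F - Id" "H = ?H p"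
      by blast
    with assms(2) show "negligible H"
      by (cases p) (auto intro!: negligible_hyperplane simp: inj_on_def)
  qed
  show "{x. \<not> inj_on (\<lambda>b. u b \<bullet> x + k b) F} \<subseteq> (\<Union>p\<in>F \<times> F - Id. ?H p)"
    by (auto simp: inj_on_def inner_diff_left algebra_simps)
qed

lemma ex_line_separating_affine_forms:
  fixes P :: "'b \<Rightarrow> real^'n^'n" and q :: "'b \<Rightarrow> real^'n" and B :: "(real^'n) set"
  assumes "finite F" "inj_on (\<lambda>b. (P b, q b)) F"
    and "B \<in> sets borel" "emeasure lborel B > 0"
  obtains x v where "emeasure lborel {t::real \<in> {0..1}. x + t *\<^sub>R v \<in> B} > 0"
    and "inj_on (\<lambda>b. v \<bullet> (q b - P b *v x)) F"
proof -
  have "inj_on (\<lambda>b. (transpose (P b), q b)) F"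
    using assms(2) by (simp add: inj_on_def)
  then have "\<exists>v. inj_on (\<lambda>b. (transpose (P b) *v v, q b \<bullet> v)) F"
    by (rule ex_vector_inj_on_mult_vector_inner[OF assms(1)])
  then obtain v where v: "inj_on (\<lambda>b. (transpose (P b) *v v, q b \<bullet> v)) F"
    by blast
  define u where "u b = - (transpose (P b) *v v)" for b
  define k where "k b = q b \<bullet> v" for b
  have "negligible {x. \<not> inj_on (\<lambda>b. u b \<bullet> x + k b) F}"
    using v by (intro negligible_affine_coincidences[OF assms(1)]) (auto simp: inj_on_def u_def k_def)
  then obtain x where x: "x \<notin> {x. \<not> inj_on (\<lambda>b. u b \<bullet> x + k b) F}"
    and line: "emeasure lborel {t::real \<in> {0..1}. x + t *\<^sub>R v \<in> B} > 0"
    unfolding negligible_iff_null_sets by (rule emeasure_lborel_line_section_pos[OF assms(3,4)])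
  have "v \<bullet> (q b - P b *v x) = u b \<bullet> x + k b" for b
    by (simp add: u_def k_def inner_diff_right dot_lmul_matrix inner_commute[of "q b" v])
  with x show thesis
    by (intro that[OF line]) simp
qed

lemma inj_on_precision_params:
  fixes m :: "'b \<Rightarrow> real^'n" and S :: "'b \<Rightarrow> real^'n^'n"
  assumes "\<And>b. b \<in> F \<Longrightarrow> invertible (S b)" "inj_on (\<lambda>b. (m b, S b)) F"
  shows "inj_on (\<lambda>b. (matrix_inv (S b), matrix_inv (S b) *v m b)) F"
proof (rule inj_onI)
  fix b b' assume b: "b \<in> F" "b' \<in> F"
    and eq: "(matrix_inv (S b), matrix_inv (S b) *v m b) = (matrix_inv (S b'), matrix_inv (S b') *v m b')"
  from eq obtain inv_eq: "matrix_inv (S b) = matrix_inv (S b')"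
    and mean_eq: "matrix_inv (S b) *v m b = matrix_inv (S b') *v m b'"
    by (rule Pair_inject)
  then have "S b = S b'"
    using matrix_inv_injective assms(1) b by blast
  moreover have "m b = m b'"
  proof -
    have "matrix_inv (S b) *v (m b - m b') = matrix_inv (S b') *v m b' - matrix_inv (S b) *v m b'"
      using mean_eq by (simp add: matrix_vector_mult_diff_distrib)
    also have "\<dots> = 0"
      using inv_eq by simp
    finally show ?thesis
      using matrix_inv_mult_vector_eq_0_iff[OF assms(1)[OF b(1)]] by simp
  qed
  ultimately show "b = b'"
    using assms(2) b by (auto dest: inj_onD)
qed

lemma lin_indep_finite_mixtures_gauss_density:
  fixes m :: "'b \<Rightarrow> real^'n" and S :: "'b \<Rightarrow> real^'n^'n"
  assumes pd: "\<And>b. b \<in> B \<Longrightarrow> pos_def_mat (S b)"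
    and inj: "inj_on (\<lambda>b. (m b, S b)) B"
    and Z: "Z \<in> sets lebesgue" "emeasure lebesgue Z > 0"
  shows "lin_indep_finite_mixtures B (\<lambda>b z. gauss_density z (m b) (S b)) Z"
proof (rule lin_indep_finite_mixturesI)
  fix F c b0
  assume F: "finite F" "F \<subseteq> B" and b0: "b0 \<in> F"
    and mixture: "\<And>z. z \<in> Z \<Longrightarrow> (\<Sum>b\<in>F. c b * gauss_density z (m b) (S b)) = 0"
  define P where "P b = matrix_inv (S b)" for b
  have invertible: "invertible (S b)" and symmetric: "transpose (P b) = P b" if "b \<in> F" for b
    using pd F(2) that pos_def_mat_invertible pos_def_mat_inv_symmetric unfolding P_def by blast+
  have precision_inj: "inj_on (\<lambda>b. (P b, P b *v m b)) F"
    unfolding P_def using invertible inj F(2) by (intro inj_on_precision_params) (auto intro: inj_on_subset)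
  obtain Bz where Bz: "Bz \<in> sets borel" "Bz \<subseteq> Z" "emeasure lborel Bz > 0"
    using lebesgue_pos_imp_borel_subset[OF Z] .
  \<comment> \<open>On the line x + t v, the coefficient of t in the exponent of the density of N(m b, S b)
      is v . (P b m b - P b x).\<close>
  obtain x v where
    line: "emeasure lborel {t::real \<in> {0..1}. x + t *\<^sub>R v \<in> Bz} > 0"
    and separated: "inj_on (\<lambda>b. v \<bullet> (P b *v m b - P b *v x)) F"
    by (rule ex_line_separating_affine_forms[OF F(1) precision_inj Bz(1) Bz(3)])
  define T where "T = {t::real \<in> {0..1}. x + t *\<^sub>R v \<in> Bz}"
  obtain \<xi> where "\<xi> islimpt T"
    by (rule emeasure_lborel_pos_imp_islimpt[of T])
       (use line in \<open>auto simp: T_def intro: bounded_subset[OF bounded_closed_interval]\<close>)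
  define a where "a b = - (1/2) * (v \<bullet> (P b *v v))" for b
  define \<beta> where "\<beta> b = v \<bullet> (P b *v (m b - x))" for b
  define d where "d b = c b * gauss_density x (m b) (S b)" for b
  have along: "gauss_density (x + s *\<^sub>R v) (m b) (S b)
                = gauss_density x (m b) (S b) * exp (a b * s^2 + \<beta> b * s)" if "b \<in> F" for b s
    using gauss_density_along_line[OF symmetric[OF that, unfolded P_def]]
    by (simp add: a_def \<beta>_def P_def)
  have "(\<Sum>b\<in>F. d b * exp (a b * t^2 + \<beta> b * t)) = 0" for t
  proof (rule exp_quadratic_sum_eq_0_if_islimpt[OF \<open>\<xi> islimpt T\<close>])
    fix s assume "s \<in> T"
    then have "(\<Sum>b\<in>F. c b * gauss_density (x + s *\<^sub>R v) (m b) (S b)) = 0"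
      using Bz(2) mixture unfolding T_def by blast
    moreover have "(\<Sum>b\<in>F. c b * gauss_density (x + s *\<^sub>R v) (m b) (S b))
                   = (\<Sum>b\<in>F. d b * exp (a b * s^2 + \<beta> b * s))"
      by (rule sum.cong) (simp_all add: along d_def)
    ultimately show "(\<Sum>b\<in>F. d b * exp (a b * s^2 + \<beta> b * s)) = 0"
      by simp
  qed
  moreover have "inj_on (\<lambda>b. (a b, \<beta> b)) F"
    using separated by (auto simp: inj_on_def \<beta>_def matrix_vector_mult_diff_distrib)
  ultimately have "d b0 = 0"
    using exp_quadratic_linearly_independent[OF F(1)] b0 by blast
  moreover have "gauss_density x (m b0) (S b0) \<noteq> 0"
    using invertible[OF b0] by (simp add: gauss_density_def invertible_det_nz)
  ultimately show "c b0 = 0"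
    by (simp add: d_def)
qed

lemma ex_point_inj_on_outside_null_coincidences:
  assumes "finite F" "Y \<in> sets M" "emeasure M Y > 0"
    and "\<And>b b'. b \<in> F \<Longrightarrow> b' \<in> F \<Longrightarrow> b \<noteq> b' \<Longrightarrow>
           {y \<in> space M. f y b = f y b'} \<in> null_sets M"
  obtains y where "y \<in> Y" "inj_on (f y) F"
proof -
  define C where "C = (\<Union>(b, b')\<in>F \<times> F - Id. {y \<in> space M. f y b = f y b'})"
  have "C \<in> null_sets M"
    unfolding C_def using assms(1,4) by (intro null_sets.finite_UN) auto
  have "\<not> Y \<subseteq> C"
  proof
    assume "Y \<subseteq> C"
    then have "Y \<in> null_sets M"
      using null_sets_subset[OF \<open>C \<in> null_sets M\<close> assms(2)] by blast
    with assms(3) show False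
      by (simp add: null_sets_def)
  qed
  then obtain y where "y \<in> Y" "y \<notin> C"
    by blast
  moreover have "y \<in> space M"
    using \<open>y \<in> Y\<close> assms(2) sets.sets_into_space by blast
  ultimately show thesis
    by (intro that[of y]) (auto simp: C_def inj_on_def)
qed

lemma lin_indep_finite_mixtures_conditional_gauss_density:
  fixes mu :: "'y::euclidean_space \<Rightarrow> 'b \<Rightarrow> real^'m" and Sig :: "'y \<Rightarrow> 'b \<Rightarrow> real^'m^'m"
  assumes pd: "\<And>y b. b \<in> B \<Longrightarrow> pos_def_mat (Sig y b)"
    and zero_meas: "\<And>b b'. b \<in> B \<Longrightarrow> b' \<in> B \<Longrightarrow> b \<noteq> b' \<Longrightarrow>
          {y. mu y b = mu y b' \<and> Sig y b = Sig y b'} \<in> null_sets lebesgue"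
    and Y': "Y' \<in> sets lebesgue" "emeasure lebesgue Y' > 0"
    and Z: "Z \<in> sets lebesgue" "emeasure lebesgue Z > 0"
  shows "lin_indep_finite_mixtures B (\<lambda>b (z, y). gauss_density z (mu y b) (Sig y b)) (Z \<times> Y')"
proof (rule lin_indep_finite_mixturesI)
  fix F c b0
  assume F: "finite F" "F \<subseteq> B" and b0: "b0 \<in> F"
    and mixture: "\<And>p. p \<in> Z \<times> Y' \<Longrightarrow>
      (\<Sum>b\<in>F. c b * (case p of (z, y) \<Rightarrow> gauss_density z (mu y b) (Sig y b))) = 0"
  have "{y \<in> space lebesgue. (mu y b, Sig y b) = (mu y b', Sig y b')} \<in> null_sets lebesgue"
    if "b \<in> F" "b' \<in> F" "b \<noteq> b'" for b b'
  proof -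
    have "b \<in> B" "b' \<in> B"
      using that(1,2) F(2) by auto
    then show ?thesis
      by (simp add: zero_meas that(3))
  qed
  then obtain y where "y \<in> Y'" and inj: "inj_on (\<lambda>b. (mu y b, Sig y b)) F"
    by (rule ex_point_inj_on_outside_null_coincidences[OF F(1) Y'])
  have "lin_indep_finite_mixtures F (\<lambda>b z. gauss_density z (mu y b) (Sig y b)) Z"
    using F(2) by (intro lin_indep_finite_mixtures_gauss_density[OF _ inj Z] pd) auto
  moreover have "(\<Sum>b\<in>F. c b * gauss_density z (mu y b) (Sig y b)) = 0" if "z \<in> Z" for z
    using mixture[of "(z, y)"] that \<open>y \<in> Y'\<close> by simp
  ultimately show "c b0 = 0"
    by (rule lin_indep_finite_mixturesD[OF _ F(1) order_refl _ b0])
qed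

theorem proposition6:
  fixes B :: "'b set"
    and mu :: "(real^'m)^'k \<Rightarrow> 'b \<Rightarrow> real^'m"
    and Sig :: "(real^'m)^'k \<Rightarrow> 'b \<Rightarrow> real^'m^'m"
  assumes pd: "\<And>y b. b \<in> B \<Longrightarrow> pos_def_mat (Sig y b)"
    and unique_idx: "\<And>b b'. b \<in> B \<Longrightarrow> b' \<in> B \<Longrightarrow> b \<noteq> b' \<Longrightarrow>
          \<exists>Z. Z \<in> sets lebesgue \<and> emeasure lebesgue Z > 0 \<and>
              (\<forall>y\<in>Z. mu y b \<noteq> mu y b' \<or> Sig y b \<noteq> Sig y b')"
    and zero_meas: "\<And>b b'. b \<in> B \<Longrightarrow> b' \<in> B \<Longrightarrow> b \<noteq> b' \<Longrightarrow>
          {y. mu y b = mu y b' \<and> Sig y b = Sig y b'} \<in> null_sets lebesgue"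
  shows "\<exists>Y. Y \<in> sets lebesgue \<and> UNIV - Y \<in> null_sets (lebesgue :: ((real^'m)^'k) measure) \<and>
           (\<forall>Y' Z. Y' \<subseteq> Y \<and> Y' \<in> sets lebesgue \<and> emeasure lebesgue Y' > 0 \<and>
                   Z \<in> sets (lebesgue :: (real^'m) measure) \<and> emeasure lebesgue Z > 0 \<longrightarrow>
              lin_indep_finite_mixtures B
                (\<lambda>b (z, y). gauss_density z (mu y b) (Sig y b)) (Z \<times> Y'))"
proof (intro exI[of _ UNIV] conjI allI impI)
  fix Y' :: "((real^'m)^'k) set" and Z :: "(real^'m) set"
  assume "Y' \<subseteq> UNIV \<and> Y' \<in> sets lebesgue \<and> emeasure lebesgue Y' > 0 \<and>
    Z \<in> sets lebesgue \<and> emeasure lebesgue Z > 0"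
  then show "lin_indep_finite_mixtures B (\<lambda>b (z, y). gauss_density z (mu y b) (Sig y b)) (Z \<times> Y')"
    by (intro lin_indep_finite_mixtures_conditional_gauss_density[OF pd zero_meas]) auto
qed simp_all

end
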